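(* Let $q$ be even and $n\ge1$, and let $W$ be an $n$-dimensional Wild subspace over $\mathrm{GF}(q)$. If $f,g\in W$ with $f\neq g$, then $f(1)\neq g(1)$.
   Context: Let $q$ be even. An o-permutation over $\mathrm{GF}(q^n)$ is a function $f:\mathrm{GF}(q^n)\to\mathrm{GF}(q^n)$ with $f(0)=0$ such that, for every $s\in\mathrm{GF}(q^n)$, the map $x\mapsto (f(x+s)+f(s))/x$ is a permutation of $\mathrm{GF}(q^n)\setminus\{0\}$; an o-polynomial is an o-permutation $f$ with $f(1)=1$. Let $\mathfrak F$ be the $\mathrm{GF}(q)$-vector space of all functions $f:\mathrm{GF}(q^n)\to\mathrm{GF}(q^n)$ with $f(0)=0$. An $n$-dimensional Wild subspace over $\mathrm{GF}(q)$ is an $n$-dimensional $\mathrm{GF}(q)$-subspace $W$ of $\mathfrak F$ every nonzero element of which is an o-permutation over $\mathrm{GF}(q^n)$. *)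

theory Defs
  imports Main
begin

text \<open>GF(q^n) is modelled as a finite field type 'a; GF(q) as a subfield K of it.\<close>

definition subfield :: "'a::field set \<Rightarrow> bool" where
  "subfield K \<longleftrightarrow> 0 \<in> K \<and> 1 \<in> K \<and>
     (\<forall>x\<in>K. \<forall>y\<in>K. x + y \<in> K \<and> x - y \<in> K \<and> x * y \<in> K) \<and>
     (\<forall>x\<in>K. x \<noteq> 0 \<longrightarrow> inverse x \<in> K)"

definition o_permutation :: "('a::field \<Rightarrow> 'a) \<Rightarrow> bool" where
  "o_permutation f \<longleftrightarrow> f 0 = 0 \<and>
     (\<forall>s. bij_betw (\<lambda>x. (f (x + s) + f s) / x) (UNIV - {0}) (UNIV - {0}))"

definition frakF :: "('a::zero \<Rightarrow> 'a) set" where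
  "frakF = {f. f 0 = 0}"

text \<open>W is an n-dimensional K-subspace of the K-vector space of functions
  'a \<Rightarrow> 'a (pointwise operations, scalar multiplication by elements of K):
  W is the K-span of n K-linearly independent functions.\<close>
definition K_subspace_dim :: "'a::field set \<Rightarrow> nat \<Rightarrow> ('a \<Rightarrow> 'a) set \<Rightarrow> bool" where
  "K_subspace_dim K n W \<longleftrightarrow> (\<exists>b :: nat \<Rightarrow> 'a \<Rightarrow> 'a.
     W = {(\<lambda>x. \<Sum>i<n. c i * b i x) | c. \<forall>i<n. c i \<in> K} \<and>
     (\<forall>c. (\<forall>i<n. c i \<in> K) \<and> (\<lambda>x. \<Sum>i<n. c i * b i x) = (\<lambda>x. 0) \<longrightarrow> (\<forall>i<n. c i = 0)))"

definition wild_subspace :: "'a::field set \<Rightarrow> nat \<Rightarrow> ('a \<Rightarrow> 'a) set \<Rightarrow> bool" where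
  "wild_subspace K n W \<longleftrightarrow> W \<subseteq> frakF \<and> K_subspace_dim K n W \<and>
     (\<forall>f\<in>W. f \<noteq> (\<lambda>x. 0) \<longrightarrow> o_permutation f)"

end

theory Submission
  imports Defs
begin

text \<open>The difference of two distinct elements of a Wild subspace is a nonzero element of it, hence
  an o-permutation; an o-permutation vanishes only at 0, so the difference does not vanish at 1.\<close>

lemma o_permutation_nonzero:
  assumes "o_permutation f" and "x \<noteq> 0"
  shows "f x \<noteq> 0"
proof -
  from assms(1) have "f 0 = 0"
    and "bij_betw (\<lambda>x. (f (x + 0) + f 0) / x) (UNIV - {0}) (UNIV - {0})"
    unfolding o_permutation_def by blast+
  then have "bij_betw (\<lambda>x. f x / x) (UNIV - {0}) (UNIV - {0})"
    by simp
  then have "f x / x \<noteq> 0"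
    using bij_betwE assms(2) by blast
  then show ?thesis by auto
qed

lemma K_subspace_dim_diff:
  assumes "subfield K" and "K_subspace_dim K n W" and "f \<in> W" and "g \<in> W"
  shows "(\<lambda>x. f x - g x) \<in> W"
proof -
  from assms(2) obtain b :: "nat \<Rightarrow> 'a \<Rightarrow> 'a" where
    W: "W = {(\<lambda>x. \<Sum>i<n. c i * b i x) | c. \<forall>i<n. c i \<in> K}"
    unfolding K_subspace_dim_def by blast
  obtain c d where cd: "\<forall>i<n. c i \<in> K" "\<forall>i<n. d i \<in> K"
    and f: "f = (\<lambda>x. \<Sum>i<n. c i * b i x)" and g: "g = (\<lambda>x. \<Sum>i<n. d i * b i x)"
    using assms(3,4) W by blast
  have diff_in_K: "\<forall>i<n. c i - d i \<in> K"
    using cd assms(1) unfolding subfield_def by blast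
  have diff_eq: "(\<lambda>x. f x - g x) = (\<lambda>x. \<Sum>i<n. (c i - d i) * b i x)"
    unfolding f g by (simp add: left_diff_distrib sum_subtractf)
  show ?thesis
    unfolding W diff_eq by (intro CollectI exI[of _ "\<lambda>i. c i - d i"]) (simp add: diff_in_K)
qed

theorem lemma1:
  fixes K :: "'a::{field,finite} set" and q n :: nat and W :: "('a \<Rightarrow> 'a) set"
  assumes "even q" and "n \<ge> 1"
    and "subfield K" and "card K = q" and "card (UNIV :: 'a set) = q ^ n"
    and "wild_subspace K n W"
    and "f \<in> W" and "g \<in> W" and "f \<noteq> g"
  shows "f 1 \<noteq> g 1"
proof -
  let ?h = "\<lambda>x. f x - g x"
  have "?h \<in> W"
    using assms(3,6-8) K_subspace_dim_diff unfolding wild_subspace_def by blast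
  moreover have "?h \<noteq> (\<lambda>x. 0)"
  proof
    assume "?h = (\<lambda>x. 0)"
    then have "f = g"
      by (simp add: fun_eq_iff)
    with assms(9) show False ..
  qed
  ultimately have "o_permutation ?h"
    using assms(6) unfolding wild_subspace_def by blast
  then have "?h 1 \<noteq> 0"
    using o_permutation_nonzero one_neq_zero by blast
  then show ?thesis by simp
qed

end
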